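(* Fix $t_+\in\mathbb{C}\setminus(-\infty,-1]$ and $t_-\in\mathbb{C}\setminus[1,\infty)$. For $a,b\in I$ with $a\prec b$, the function $F_a^b(s)=\sum_{c\in I,\ a\prec c\prec b}c^{-s}$, defined for $\Re(s)>1$, extends to an entire function of $s\in\mathbb{C}$.
   Context: Let $I_+=\{n+t_+: n\in\mathbb{Z}_{\ge0}\}$, $I_-=\{-n+t_-: n\in\mathbb{Z}_{\ge0}\}$ and $I=I_+\amalg I_-$ (formal disjoint union), totally ordered by $t_+\prec1+t_+\prec2+t_+\prec\cdots\prec-2+t_-\prec-1+t_-\prec t_-$ (every element of $I_+$ precedes every element of $I_-$). For $a=n+t_+\in I_+$, $a^{-s}=(n+t_+)^{-s}$ with the principal branch of the logarithm; for $a=-n+t_-\in I_-$, $a^{-s}$ is understood as $e^{\pi is}(n-t_-)^{-s}$ (principal branch). *)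

theory Defs
  imports "HOL-Analysis.Analysis"
begin

text \<open>The index set I = I_+ disjoint-union I_-.  IP n stands for n + t_+ and IM n for -n + t_-.\<close>
datatype Iidx = IP nat | IM nat

fun Iprec :: "Iidx \<Rightarrow> Iidx \<Rightarrow> bool" where
  "Iprec (IP m) (IP n) = (m < n)"
| "Iprec (IP m) (IM n) = True"
| "Iprec (IM m) (IP n) = False"
| "Iprec (IM m) (IM n) = (n < m)"

text \<open>c^(-s): principal branch for I_+; e^(pi i s) (n - t_-)^(-s) for c = -n + t_- in I_-.\<close>
fun Ipow :: "complex \<Rightarrow> complex \<Rightarrow> Iidx \<Rightarrow> complex \<Rightarrow> complex" where
  "Ipow tp tm (IP n) s = (of_nat n + tp) powr (- s)"
| "Ipow tp tm (IM n) s = exp (of_real pi * \<i> * s) * (of_nat n - tm) powr (- s)"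

end

theory Submission
  imports Defs "HOL-Complex_Analysis.Complex_Analysis"
begin

text \<open>
  Let zeta(s, b) = (SUM k. (k + b) powr -s) for Re s > 1. Expanding (k + b + 1) powr (1 - s) by
  the binomial series and summing the telescoping differences over k gives, for Re b >= 2,
  (SUM i. ((1 - s) gchoose (i + 1)) * zeta(s + i, b)) = - b powr (1 - s). For
  E(s) = (s - 1) * zeta(s, b) this says
  E(s) = b powr (1 - s) - (SUM i. ((1 - s) gchoose (i + 1)) / (i + 2) * E(s + i + 1)),
  and the right-hand side is holomorphic one unit further to the left than E. Iterating continues
  E to an entire function with E(1) = 1. So each of the two infinite halves of an interval of I is
  an entire function divided by s - 1, with numerator 1 at s = 1; the I_- half carries the factor
  exp(pi i s), and exp(pi i) = -1, so the two poles cancel.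
\<close>

lemma norm_powr_le: "norm ((x::complex) powr y) \<le> norm x powr Re y * exp (pi * \<bar>Im y\<bar>)"
proof -
  have "- Im y * Arg x \<le> \<bar>Im y\<bar> * \<bar>Arg x\<bar>"
    by (metis abs_ge_self abs_minus_cancel abs_mult mult_minus_left)
  also have "\<dots> \<le> \<bar>Im y\<bar> * pi"
    using Arg_bounded[of x] by (intro mult_left_mono) auto
  finally show ?thesis
    unfolding norm_powr_complex by (intro mult_left_mono) (auto simp: mult.commute)
qed

lemma norm_of_nat_add_ge: "Re b \<ge> 0 \<Longrightarrow> real k + Re b \<le> norm (of_nat k + b)"
  using abs_Re_le_cmod[of "of_nat k + b"] by simp

lemma norm_shifted_powr_le:
  assumes "Re b > 0" "Re z \<le> 0"
  shows "norm ((of_nat k + b) powr z) \<le> (real k + Re b) powr Re z * exp (pi * \<bar>Im z\<bar>)"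
proof -
  have "norm ((of_nat k + b) powr z) \<le> norm (of_nat k + b) powr Re z * exp (pi * \<bar>Im z\<bar>)"
    by (rule norm_powr_le)
  also have "\<dots> \<le> (real k + Re b) powr Re z * exp (pi * \<bar>Im z\<bar>)"
    using assms norm_of_nat_add_ge[of b k] by (intro mult_right_mono powr_mono2') auto
  finally show ?thesis .
qed

lemma powr_diff_nat_le:
  fixes x c a :: real
  assumes "0 < c" "c \<le> x"
  shows "x powr (a - real i) \<le> x powr a / c ^ i"
proof -
  have "x powr (a - real i) = x powr a / x ^ i"
    using assms by (simp add: powr_diff powr_realpow)
  also have "\<dots> \<le> x powr a / c ^ i"
    using assms by (intro divide_left_mono power_mono mult_pos_pos zero_less_power) auto
  finally show ?thesis .
qed

lemma add_nat_div_four_power_le: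
  fixes c :: real
  assumes "c \<ge> 0"
  shows "(c + real i) / 4 ^ i \<le> (c + 1) / 2 ^ i"
proof -
  have "Suc i \<le> 2 ^ i" using less_exp[of i] by (rule Suc_leI)
  then have "real i + 1 \<le> 2 ^ i" using of_nat_mono[of "Suc i" "2 ^ i", where 'a = real] by simp
  moreover have "c \<le> c * 2 ^ i" using mult_left_mono[of 1 "2 ^ i" c] assms by simp
  ultimately have "c + real i \<le> (c + 1) * 2 ^ i" by (simp add: distrib_right)
  then have "(c + real i) / 4 ^ i \<le> (c + 1) * 2 ^ i / 4 ^ i" by (rule divide_right_mono) simp
  also have "\<dots> = (c + 1) * 2 ^ i / (2 ^ i * 2 ^ i)"
    by (simp flip: power_mult_distrib)
  also have "\<dots> = (c + 1) / 2 ^ i"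
    by simp
  finally show ?thesis .
qed

lemma summable_shifted_powr:
  assumes "\<rho> \<ge> 0" "\<sigma> > 1"
  shows "summable (\<lambda>k. (real k + \<rho>) powr (- \<sigma>))"
proof (rule summable_comparison_test'[where N=1])
  show "summable (\<lambda>k. real k powr (- \<sigma>))" using summable_real_powr_iff assms by simp
  show "norm ((real n + \<rho>) powr (- \<sigma>)) \<le> real n powr (- \<sigma>)" if "n \<ge> 1" for n
    using assms that by (auto intro!: powr_mono2')
qed

lemma powr_mult_Re_pos:
  fixes w v p :: complex
  assumes "Re w > 0" "Re v > 0"
  shows "(w * v) powr p = w powr p * v powr p"
proof -
  have "\<bar>Im (Ln w)\<bar> < pi / 2" "\<bar>Im (Ln v)\<bar> < pi / 2"
    using assms Re_Ln_pos_lt_imp by auto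
  then have "Ln (w * v) = Ln w + Ln v"
    using assms by (intro Ln_times_simple) auto
  then show ?thesis
    using assms by (auto simp: powr_def exp_add distrib_left)
qed

lemma binomial_powr_add_one_sums:
  fixes w p :: complex
  assumes "Re w > 0" "norm w > 1"
  shows "(\<lambda>i. (p gchoose Suc i) * w powr (p - of_nat (Suc i))) sums ((w + 1) powr p - w powr p)"
proof -
  define z where "z = 1 / w"
  have w: "w \<noteq> 0" using assms by auto
  have z: "norm z < 1" using assms by (simp add: z_def norm_divide divide_less_eq)
  then have "Re (1 + z) > 0" using abs_Re_le_cmod[of z] by simp
  then have "w powr p * (1 + z) powr p = (w * (1 + z)) powr p"
    using assms by (intro powr_mult_Re_pos[symmetric])
  also have "w * (1 + z) = w + 1" using w by (simp add: z_def distrib_left)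
  finally have "(\<lambda>n. w powr p * ((p gchoose n) * z ^ n)) sums (w + 1) powr p"
    using sums_mult[OF gen_binomial_complex[OF z, where a = p], of "w powr p"] by simp
  moreover have "w powr p * ((p gchoose n) * z ^ n) = (p gchoose n) * w powr (p - of_nat n)" for n
  proof -
    have "w powr p * z ^ n = w powr (p - of_nat n)"
      using w by (simp add: z_def powr_diff power_one_over powr_nat')
    then show ?thesis by (simp add: mult_ac)
  qed
  ultimately have "(\<lambda>n. (p gchoose n) * w powr (p - of_nat n)) sums (w + 1) powr p"
    by simp
  then show ?thesis
    by (subst sums_Suc_iff) simp
qed

lemma sums_shifted_powr_differences:
  assumes "Re b > 0" "Re p < 0"
  shows "(\<lambda>k. (of_nat (Suc k) + b) powr p - (of_nat k + b) powr p) sums (- (b powr p))"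
proof -
  have "filterlim (\<lambda>k. real k + Re b) at_top sequentially"
    using filterlim_tendsto_add_at_top[OF tendsto_const filterlim_real_sequentially, of "Re b"]
    by (simp add: add.commute)
  then have "(\<lambda>k. (real k + Re b) powr Re p) \<longlonglongrightarrow> 0"
    using assms(2) by (rule tendsto_neg_powr[rotated])
  then have majorant: "(\<lambda>k. (real k + Re b) powr Re p * exp (pi * \<bar>Im p\<bar>)) \<longlonglongrightarrow> 0"
    by (rule tendsto_mult_left_zero)
  have "(\<lambda>k. (of_nat k + b) powr p) \<longlonglongrightarrow> 0"
  proof (rule Lim_null_comparison[OF always_eventually majorant], rule allI)
    show "norm ((of_nat k + b) powr p) \<le> (real k + Re b) powr Re p * exp (pi * \<bar>Im p\<bar>)" for k
      using assms by (intro norm_shifted_powr_le) auto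
  qed
  from telescope_sums[OF this] show ?thesis by simp
qed

lemma norm_gbinomial_le_pochhammer:
  "norm ((a::complex) gchoose k) \<le> pochhammer (norm a) k / fact k"
proof -
  have "norm (pochhammer (- a) k) = (\<Prod>i<k. norm (- a + of_nat i))"
    by (simp add: pochhammer_prod atLeast0LessThan prod_norm)
  also have "\<dots> \<le> (\<Prod>i<k. norm a + real i)"
    using norm_triangle_ineq[of "- a" "of_nat i" for i] by (intro prod_mono) auto
  also have "\<dots> = pochhammer (norm a) k"
    by (simp add: pochhammer_prod atLeast0LessThan)
  finally show ?thesis
    by (simp add: gbinomial_pochhammer norm_divide norm_mult norm_power divide_right_mono)
qed

lemma pochhammer_mono:
  fixes x y :: real
  assumes "0 \<le> x" "x \<le> y"
  shows "pochhammer x k \<le> pochhammer y k"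
  unfolding pochhammer_prod using assms by (intro prod_mono) auto

lemma summable_pochhammer_power:
  fixes A r :: real
  assumes "\<bar>r\<bar> < 1"
  shows "summable (\<lambda>k. pochhammer A k / fact k * r ^ k)"
proof -
  have "(\<lambda>k. ((- A) gchoose k) * (- r) ^ k) sums (1 + - r) powr (- A)"
    using assms by (intro gen_binomial_real) simp
  moreover have "((- A) gchoose k) * (- r) ^ k = pochhammer A k / fact k * r ^ k" for k
    by (simp add: gbinomial_pochhammer power_mult_distrib[symmetric])
  ultimately show ?thesis by (simp add: sums_iff)
qed

lemma norm_gbinomial_div_le_pochhammer:
  fixes a :: complex
  assumes "norm a \<le> A"
  shows "norm ((a gchoose Suc i) / of_nat (i + 2)) \<le> pochhammer A (Suc i) / fact (Suc i)"
proof -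
  have "norm ((a gchoose Suc i) / of_nat (i + 2)) \<le> norm (a gchoose Suc i)"
    unfolding norm_divide norm_of_nat
    using frac_le[of "norm (a gchoose Suc i)" _ 1 "real (i + 2)"] by simp
  also have "\<dots> \<le> pochhammer (norm a) (Suc i) / fact (Suc i)"
    by (rule norm_gbinomial_le_pochhammer)
  also have "\<dots> \<le> pochhammer A (Suc i) / fact (Suc i)"
    using assms by (intro divide_right_mono pochhammer_mono) auto
  finally show ?thesis .
qed

lemma summable_pochhammer_Suc_div_power2:
  fixes A M :: real
  shows "summable (\<lambda>i. pochhammer A (Suc i) / fact (Suc i) * (M / 2 ^ i))"
proof -
  have "summable (\<lambda>i. pochhammer A (Suc i) / fact (Suc i) * (1 / 2) ^ Suc i)"
    using summable_pochhammer_power[of "1 / 2" A] by (subst summable_Suc_iff) simp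
  then have "summable (\<lambda>i. 2 * M * (pochhammer A (Suc i) / fact (Suc i) * (1 / 2) ^ Suc i))"
    by (rule summable_mult)
  moreover have "2 * M * (pochhammer A (Suc i) / fact (Suc i) * (1 / 2) ^ Suc i)
      = pochhammer A (Suc i) / fact (Suc i) * (M / 2 ^ i)" for i
    by (simp add: power_one_over mult_ac)
  ultimately show ?thesis by simp
qed

lemma holomorphic_gbinomial_one_minus: "(\<lambda>s. (1 - s) gchoose n) holomorphic_on S"
  by (intro analytic_imp_holomorphic analytic_intros)

lemma summable_on_product_nonneg:
  fixes G H :: "nat \<Rightarrow> real"
  assumes "summable H" "summable G" "\<And>k. H k \<ge> 0" "\<And>i. G i \<ge> 0"
  shows "(\<lambda>(k, i). H k * G i) summable_on UNIV"
proof -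
  have rows: "((\<lambda>i. H k * G i) has_sum H k * suminf G) UNIV" for k
    by (intro has_sum_cmult_right sums_nonneg_imp_has_sum summable_sums assms)
  have "(\<lambda>k. H k * suminf G) summable_on UNIV"
    by (intro summable_nonneg_imp_summable_on summable_mult2 mult_nonneg_nonneg suminf_nonneg assms)
  then have "(\<lambda>(k, i). H k * G i) summable_on Sigma UNIV (\<lambda>_. UNIV)"
    using rows assms(3,4)
    by (intro summable_on_SigmaI[where f = "\<lambda>(k, i). H k * G i" and g = "\<lambda>k. H k * suminf G"])
       simp_all
  then show ?thesis by simp
qed

lemma sums_of_row_sums:
  fixes T :: "nat \<Rightarrow> nat \<Rightarrow> complex"
  assumes sum: "((\<lambda>(k, i). T k i) has_sum S) UNIV" and rows: "\<And>k. (\<lambda>i. T k i) sums R k"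
  shows "R sums S"
proof -
  have "(\<lambda>(k, i). T k i) summable_on Sigma UNIV (\<lambda>_. UNIV)"
    using sum by (auto simp: summable_on_def)
  then have "(\<lambda>i. T k i) summable_on UNIV" for k
    using summable_on_SigmaD1[of T UNIV "\<lambda>_. UNIV" k] by simp
  then have row_sum: "((\<lambda>i. T k i) has_sum infsum (\<lambda>i. T k i) UNIV) UNIV" for k
    by (rule has_sum_infsum)
  have "infsum (\<lambda>i. T k i) UNIV = R k" for k
    using has_sum_imp_sums[OF row_sum] rows by (rule sums_unique2)
  then have "((\<lambda>i. T k i) has_sum R k) UNIV" for k
    using row_sum by simp
  then have "(R has_sum S) UNIV"
    using sum has_sum_SigmaD[where f = "\<lambda>(k, i). T k i" and A = UNIV and B = "\<lambda>_. UNIV" and g = R]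
    by simp
  then show ?thesis by (rule has_sum_imp_sums)
qed

lemma sums_swap_abs_summable:
  fixes T :: "nat \<Rightarrow> nat \<Rightarrow> complex"
  assumes "(\<lambda>(k, i). norm (T k i)) summable_on UNIV"
    and "\<And>k. (\<lambda>i. T k i) sums R k" "\<And>i. (\<lambda>k. T k i) sums C i" "R sums S"
  shows "C sums S"
proof -
  obtain S' where S': "((\<lambda>(k, i). T k i) has_sum S') UNIV"
    using abs_summable_summable[of "\<lambda>(k, i). T k i"] assms(1)
    by (auto simp: summable_on_def case_prod_unfold)
  then have "((\<lambda>(i, k). T k i) has_sum S') UNIV"
    using has_sum_swap[where f = "\<lambda>(k, i). T k i" and A = UNIV and B = UNIV] by simp
  then have "C sums S'"
    using assms(3) by (rule sums_of_row_sums)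
  moreover have "S' = S"
    using sums_of_row_sums[OF S' assms(2)] assms(4) by (rule sums_unique2)
  ultimately show ?thesis by simp
qed

lemma holomorphic_on_suminf_local_majorant:
  fixes f :: "nat \<Rightarrow> complex \<Rightarrow> complex"
  assumes S: "open S" and hol: "\<And>n. f n holomorphic_on S"
    and majorant: "\<And>x. x \<in> S \<Longrightarrow> \<exists>d h. 0 < d \<and> summable h \<and>
                     (\<forall>\<^sub>F n in sequentially. \<forall>y\<in>ball x d \<inter> S. norm (f n y) \<le> h n)"
  shows "(\<lambda>x. \<Sum>n. f n x) holomorphic_on S"
proof -
  have deriv: "(f n has_field_derivative deriv (f n) x) (at x)" if "x \<in> S" for n x
    using hol S that by (rule holomorphic_derivI)
  obtain g g' where g: "\<forall>x\<in>S. (\<lambda>n. f n x) sums g x \<and> (\<lambda>n. deriv (f n) x) sums g' x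
      \<and> (g has_field_derivative g' x) (at x)"
    using series_and_derivative_comparison_local[OF S deriv majorant] by blast
  then have "g holomorphic_on S"
    unfolding holomorphic_on_open[OF S] by blast
  moreover have "g x = (\<Sum>n. f n x)" if "x \<in> S" for x
    using g that sums_unique by blast
  ultimately show ?thesis
    by (rule holomorphic_transform)
qed

lemma halfplane_extensions_agree:
  fixes f :: "nat \<Rightarrow> complex \<Rightarrow> complex"
  assumes hol: "\<And>N. f N holomorphic_on {s. Re s > c - real N}"
    and agree: "\<And>N s. Re s > c \<Longrightarrow> f N s = f 0 s"
    and "M \<le> N" "Re s > c - real M"
  shows "f M s = f N s"
proof (rule analytic_continuation_open[where s = "{w. Re w > c}" and s' = "{w. Re w > c - real M}"
      and f = "f M" and g = "f N"])
  show "open {w. Re w > c}" "open {w. Re w > c - real M}"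
    by (rule open_halfspace_Re_gt)+
  show "connected {w. Re w > c - real M}"
    by (rule convex_connected, rule convex_halfspace_Re_gt)
  show "{w. Re w > c} \<noteq> {}"
    using mem_Collect_eq[of "of_real (c + 1)" "\<lambda>w. Re w > c"] by force
  show "{w. Re w > c} \<subseteq> {w. Re w > c - real M}" by auto
  show "f M holomorphic_on {w. Re w > c - real M}" by (rule hol)
  show "f N holomorphic_on {w. Re w > c - real M}"
    by (rule holomorphic_on_subset[OF hol]) (use assms(3) in auto)
  show "f M w = f N w" if "w \<in> {w. Re w > c}" for w
    using agree[of w M] agree[of w N] that by simp
  show "s \<in> {w. Re w > c - real M}" using assms(4) by simp
qed


lemma entire_of_halfplane_extensions:
  fixes f :: "nat \<Rightarrow> complex \<Rightarrow> complex"
  assumes hol: "\<And>N. f N holomorphic_on {s. Re s > c - real N}"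
    and agree: "\<And>N s. Re s > c \<Longrightarrow> f N s = f 0 s"
  shows "\<exists>g. g holomorphic_on UNIV \<and> (\<forall>N s. Re s > c - real N \<longrightarrow> g s = f N s)"
proof -
  have consistent: "f M s = f N s" if "M \<le> N" "Re s > c - real M" for M N s
    using hol agree that by (rule halfplane_extensions_agree)
  define level where "level s = nat \<lceil>c - Re s\<rceil> + 1" for s
  have level: "Re s > c - real (level s)" for s
    unfolding level_def by linarith
  define g where "g s = f (level s) s" for s
  have g: "g s = f N s" if "Re s > c - real N" for N s
  proof -
    have "f (level s) s = f (max N (level s)) s"
      using level by (intro consistent) auto
    also have "\<dots> = f N s"
      using that by (intro consistent[symmetric]) auto
    finally show ?thesis by (simp add: g_def)
  qed
  have "(g has_field_derivative deriv (f (level x)) x) (at x)" for x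
  proof (rule has_field_derivative_transform_within_open)
    show "(f (level x) has_field_derivative deriv (f (level x)) x) (at x)"
      by (rule holomorphic_derivI[OF hol open_halfspace_Re_gt]) (simp add: level)
    show "open {s. Re s > c - real (level x)}" by (rule open_halfspace_Re_gt)
    show "x \<in> {s. Re s > c - real (level x)}" by (simp add: level)
    show "f (level x) s = g s" if "s \<in> {s. Re s > c - real (level x)}" for s
      using g that by simp
  qed
  then have "g holomorphic_on UNIV"
    using holomorphic_on_open by blast
  then show ?thesis
    using g by blast
qed

section \<open>The Hurwitz zeta series\<close>

text \<open>Only meaningful for Re b > 0 and Re s > 1; elsewhere suminf returns a junk value.\<close>
definition hurwitz_zeta :: "complex \<Rightarrow> complex \<Rightarrow> complex" where
  "hurwitz_zeta b s = (\<Sum>k. (of_nat k + b) powr (- s))"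

lemma summable_norm_hurwitz_terms:
  assumes "Re b > 0" "Re s > 1"
  shows "summable (\<lambda>k. norm ((of_nat k + b) powr (- s)))"
proof (rule summable_comparison_test'[where N=0])
  show "summable (\<lambda>k. (real k + Re b) powr (- Re s) * exp (pi * \<bar>Im s\<bar>))"
    using summable_shifted_powr[of "Re b" "Re s"] assms by (intro summable_mult2) auto
  show "norm (norm ((of_nat k + b) powr (- s))) \<le> (real k + Re b) powr (- Re s) * exp (pi * \<bar>Im s\<bar>)" for k
    using norm_shifted_powr_le[of b "- s" k] assms by simp
qed

lemma hurwitz_zeta_sums:
  "Re b > 0 \<Longrightarrow> Re s > 1 \<Longrightarrow> (\<lambda>k. (of_nat k + b) powr (- s)) sums hurwitz_zeta b s"
  unfolding hurwitz_zeta_def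
  by (rule summable_sums[OF summable_norm_cancel[OF summable_norm_hurwitz_terms]])

lemma hurwitz_zeta_has_sum:
  "Re b > 0 \<Longrightarrow> Re s > 1 \<Longrightarrow> ((\<lambda>k. (of_nat k + b) powr (- s)) has_sum hurwitz_zeta b s) UNIV"
  by (rule norm_summable_imp_has_sum[OF summable_norm_hurwitz_terms hurwitz_zeta_sums])

lemma holomorphic_hurwitz_zeta:
  assumes b: "Re b > 0"
  shows "hurwitz_zeta b holomorphic_on {s. Re s > 1}"
  unfolding hurwitz_zeta_def[abs_def]
proof (rule holomorphic_on_suminf_local_majorant)
  show "(\<lambda>s. (of_nat n + b) powr (- s)) holomorphic_on {s. Re s > 1}" for n
    by (intro holomorphic_intros)
  show "open {s. Re s > 1}" by (rule open_halfspace_Re_gt)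
  fix x assume "x \<in> {s. Re s > 1}"
  define d where "d = (Re x - 1) / 2"
  have d_pos: "d > 0" using \<open>x \<in> {s. Re s > 1}\<close> by (simp add: d_def)
  have bound: "norm ((of_nat k + b) powr (- y))
      \<le> (real k + Re b) powr (- (1 + d)) * exp (pi * (\<bar>Im x\<bar> + d))"
    if "k \<ge> 1" "y \<in> ball x d" for k y
  proof -
    have dist: "\<bar>Re x - Re y\<bar> < d" "\<bar>Im y - Im x\<bar> < d"
      using that abs_Re_le_cmod[of "x - y"] abs_Im_le_cmod[of "y - x"]
      by (auto simp: dist_norm norm_minus_commute)
    have "Re x = 1 + 2 * d" by (simp add: d_def field_simps)
    then have Re_y: "Re y \<ge> 1 + d" using dist(1) by linarith
    have Im_y: "\<bar>Im y\<bar> \<le> \<bar>Im x\<bar> + d"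
      using abs_triangle_ineq[of "Im x" "Im y - Im x"] dist(2) by simp
    have "norm ((of_nat k + b) powr (- y)) \<le> (real k + Re b) powr (- Re y) * exp (pi * \<bar>Im y\<bar>)"
      using norm_shifted_powr_le[of b "- y" k] b Re_y d_pos by simp
    also have "\<dots> \<le> (real k + Re b) powr (- (1 + d)) * exp (pi * (\<bar>Im x\<bar> + d))"
      using that b Re_y Im_y by (intro mult_mono powr_mono) auto
    finally show ?thesis .
  qed
  show "\<exists>d h. 0 < d \<and> summable h \<and> (\<forall>\<^sub>F n in sequentially.
          \<forall>y\<in>ball x d \<inter> {s. Re s > 1}. norm ((of_nat n + b) powr (- y)) \<le> h n)"
  proof (intro exI conjI)
    show "summable (\<lambda>k. (real k + Re b) powr (- (1 + d)) * exp (pi * (\<bar>Im x\<bar> + d)))"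
      using summable_shifted_powr[of "Re b" "1 + d"] b d_pos by (intro summable_mult2) auto
    show "\<forall>\<^sub>F k in sequentially. \<forall>y\<in>ball x d \<inter> {s. Re s > 1}. norm ((of_nat k + b) powr (- y))
            \<le> (real k + Re b) powr (- (1 + d)) * exp (pi * (\<bar>Im x\<bar> + d))"
      using bound unfolding eventually_sequentially by (intro exI[of _ 1]) auto
  qed (fact d_pos)
qed

lemma norm_hurwitz_zeta_le:
  assumes b: "Re b > 0"
  obtains C where "C \<ge> 0"
    "\<And>w. Re w \<ge> 2 \<Longrightarrow> norm (hurwitz_zeta b w) \<le> C * exp (pi * \<bar>Im w\<bar>) * Re b powr (2 - Re w)"
proof
  define C where "C = (\<Sum>k. (real k + Re b) powr (- 2))"
  have C: "(\<lambda>k. (real k + Re b) powr (- 2)) sums C"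
    unfolding C_def using summable_shifted_powr[of "Re b" 2] b by (intro summable_sums) auto
  then show "C \<ge> 0"
    using sums_le[OF _ sums_zero C] by simp
  fix w assume w: "Re w \<ge> 2"
  have termwise: "norm ((of_nat k + b) powr (- w))
      \<le> (real k + Re b) powr (- 2) * (exp (pi * \<bar>Im w\<bar>) * Re b powr (2 - Re w))" for k
  proof -
    have "(real k + Re b) powr (- Re w) = (real k + Re b) powr (2 - Re w) * (real k + Re b) powr (- 2)"
      by (simp flip: powr_add)
    also have "\<dots> \<le> Re b powr (2 - Re w) * (real k + Re b) powr (- 2)"
      using b w by (intro mult_right_mono powr_mono2') auto
    finally have le: "(real k + Re b) powr (- Re w) \<le> Re b powr (2 - Re w) * (real k + Re b) powr (- 2)" .
    have "norm ((of_nat k + b) powr (- w)) \<le> (real k + Re b) powr (- Re w) * exp (pi * \<bar>Im w\<bar>)"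
      using norm_shifted_powr_le[of b "- w" k] b w by simp
    also have "\<dots> \<le> Re b powr (2 - Re w) * (real k + Re b) powr (- 2) * exp (pi * \<bar>Im w\<bar>)"
      using le by (rule mult_right_mono) simp
    finally show ?thesis by (simp only: mult_ac)
  qed
  have w1: "Re w > 1" using w by simp
  have "norm (hurwitz_zeta b w) \<le> (\<Sum>k. norm ((of_nat k + b) powr (- w)))"
    unfolding hurwitz_zeta_def using summable_norm_hurwitz_terms[OF b w1] by (rule summable_norm)
  also have "\<dots> \<le> C * (exp (pi * \<bar>Im w\<bar>) * Re b powr (2 - Re w))"
    by (rule sums_le[OF termwise summable_sums[OF summable_norm_hurwitz_terms[OF b w1]] sums_mult2[OF C]])
  finally show "norm (hurwitz_zeta b w) \<le> C * exp (pi * \<bar>Im w\<bar>) * Re b powr (2 - Re w)"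
    by (simp add: mult.assoc)
qed

lemma summable_norm_binomial_hurwitz_terms:
  assumes b: "Re b \<ge> 2" and s: "Re s > 1"
  shows "(\<lambda>(k, i). norm ((p gchoose Suc i) * (of_nat k + b) powr (- (s + of_nat i)))) summable_on UNIV"
proof -
  define T where "T k i = (p gchoose Suc i) * (of_nat k + b) powr (- (s + of_nat i))" for k i
  define G where "G i = pochhammer (norm p) (Suc i) / fact (Suc i) * (1 / 2) ^ Suc i" for i
  define H where "H k = 2 * ((real k + Re b) powr (- Re s) * exp (pi * \<bar>Im s\<bar>))" for k
  have G: "summable G" "G i \<ge> 0" for i
  proof -
    show "summable G"
      unfolding G_def using summable_pochhammer_power[of "1 / 2" "norm p"]
      by (subst summable_Suc_iff) simp
    show "G i \<ge> 0"
      unfolding G_def pochhammer_prod by (intro mult_nonneg_nonneg divide_nonneg_pos prod_nonneg) auto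
  qed
  have H: "summable H" "H k \<ge> 0" for k
    unfolding H_def using summable_shifted_powr[of "Re b" "Re s"] b s
    by (auto intro!: summable_mult summable_mult2)
  have bound: "norm (T k i) \<le> H k * G i" for k i
  proof -
    have "norm ((of_nat k + b) powr (- (s + of_nat i)))
        \<le> (real k + Re b) powr (- Re s - real i) * exp (pi * \<bar>Im s\<bar>)"
      using norm_shifted_powr_le[of b "- (s + of_nat i)" k] b s by simp
    also have "\<dots> \<le> (real k + Re b) powr (- Re s) / 2 ^ i * exp (pi * \<bar>Im s\<bar>)"
      using b by (intro mult_right_mono powr_diff_nat_le) auto
    also have "\<dots> = H k * (1 / 2) ^ Suc i"
      by (simp add: H_def power_one_over)
    finally have "norm (T k i) \<le> pochhammer (norm p) (Suc i) / fact (Suc i) * (H k * (1 / 2) ^ Suc i)"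
      unfolding T_def norm_mult by (rule mult_mono'[OF norm_gbinomial_le_pochhammer]) simp_all
    then show ?thesis by (simp add: G_def mult_ac)
  qed
  have "(\<lambda>(k, i). norm (T k i)) summable_on UNIV"
    by (rule summable_on_comparison_test[OF summable_on_product_nonneg[OF H(1) G(1) H(2) G(2)]])
       (use bound in auto)
  then show ?thesis by (simp add: T_def)
qed

lemma hurwitz_zeta_recurrence:
  assumes b: "Re b \<ge> 2" and s: "Re s > 1"
  shows "(\<lambda>i. ((1 - s) gchoose Suc i) * hurwitz_zeta b (s + of_nat i)) sums (- (b powr (1 - s)))"
proof -
  define p where "p = 1 - s"
  define T where "T k i = (p gchoose Suc i) * (of_nat k + b) powr (- (s + of_nat i))" for k i
  \<comment> \<open>Sum the absolutely convergent double series of the T k i by rows, where the binomial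
     series of (k + b + 1) powr p appears, and by columns, where the zeta values appear.\<close>
  have "(\<lambda>(k, i). norm (T k i)) summable_on UNIV"
    unfolding T_def using b s by (rule summable_norm_binomial_hurwitz_terms)
  moreover have "(\<lambda>i. T k i) sums ((of_nat (Suc k) + b) powr p - (of_nat k + b) powr p)" for k
  proof -
    have "Re (of_nat k + b) > 0" "norm (of_nat k + b) > 1"
      using b norm_of_nat_add_ge[of b k] by auto
    from binomial_powr_add_one_sums[OF this, of p] show ?thesis
      by (simp add: T_def p_def add_ac algebra_simps)
  qed
  moreover have "(\<lambda>k. T k i) sums ((p gchoose Suc i) * hurwitz_zeta b (s + of_nat i))" for i
    unfolding T_def using b s by (intro sums_mult hurwitz_zeta_sums) auto
  moreover have "(\<lambda>k. (of_nat (Suc k) + b) powr p - (of_nat k + b) powr p) sums (- (b powr p))"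
    using b s by (intro sums_shifted_powr_differences) (auto simp: p_def)
  ultimately show ?thesis
    unfolding p_def by (rule sums_swap_abs_summable)
qed

section \<open>Analytic continuation of the Hurwitz zeta function\<close>

text \<open>The recurrence hurwitz_zeta_recurrence, rewritten for E s = (s - 1) * hurwitz_zeta b s.
  The right-hand side evaluates E only at s + 1, s + 2, ..., so it is holomorphic one unit further
  to the left than E.\<close>
definition hurwitz_continuation_step :: "complex \<Rightarrow> (complex \<Rightarrow> complex) \<Rightarrow> complex \<Rightarrow> complex" where
  "hurwitz_continuation_step b E s =
     b powr (1 - s) - (\<Sum>i. ((1 - s) gchoose Suc i) / of_nat (i + 2) * E (s + of_nat (Suc i)))"

lemma hurwitz_continuation_step_eq:
  assumes b: "Re b \<ge> 2" and E: "\<And>w. Re w > 1 \<Longrightarrow> E w = (w - 1) * hurwitz_zeta b w"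
    and s: "Re s > 1"
  shows "hurwitz_continuation_step b E s = (s - 1) * hurwitz_zeta b s"
proof -
  define f where "f i = ((1 - s) gchoose Suc i) * hurwitz_zeta b (s + of_nat i)" for i
  have "f sums (- (b powr (1 - s)))"
    unfolding f_def using b s by (rule hurwitz_zeta_recurrence)
  then have "(\<lambda>i. f (Suc i)) sums (- (b powr (1 - s)) - f 0)"
    by (subst sums_Suc_iff) simp
  moreover have "f (Suc i) = - (((1 - s) gchoose Suc i) / of_nat (i + 2) * E (s + of_nat (Suc i)))" for i
  proof -
    have "of_nat (Suc (Suc i)) * ((1 - s) gchoose Suc (Suc i))
        = (1 - s - of_nat (Suc i)) * ((1 - s) gchoose Suc i)"
      by (simp only: gbinomial_absorption gbinomial_absorb_comp)
    then have binom: "(1 - s) gchoose Suc (Suc i)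
        = (1 - s - of_nat (Suc i)) * ((1 - s) gchoose Suc i) / of_nat (Suc (Suc i))"
      by (simp add: eq_divide_eq mult.commute del: of_nat_Suc)
    have Ei: "E (s + of_nat (Suc i)) = (s + of_nat i) * hurwitz_zeta b (s + of_nat (Suc i))"
      using s by (subst E) auto
    have "(of_nat i + 2 :: complex) \<noteq> 0"
      using of_nat_neq_0[of "Suc i", where 'a = complex] by (simp add: add.commute)
    then show ?thesis
      unfolding f_def binom Ei by (simp add: field_simps)
  qed
  moreover have "f 0 = (1 - s) * hurwitz_zeta b s"
    by (simp add: f_def)
  ultimately have "(\<lambda>i. ((1 - s) gchoose Suc i) / of_nat (i + 2) * E (s + of_nat (Suc i)))
      sums (b powr (1 - s) - (s - 1) * hurwitz_zeta b s)"
    using sums_minus by (fastforce simp: algebra_simps)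
  then show ?thesis
    unfolding hurwitz_continuation_step_def by (simp add: sums_iff)
qed

lemma hurwitz_continuation_step_at_1: "b \<noteq> 0 \<Longrightarrow> hurwitz_continuation_step b E 1 = 1"
  by (simp add: hurwitz_continuation_step_def)

lemma norm_shifted_hurwitz_continuation_le:
  assumes b: "Re b \<ge> 4" and E: "\<And>w. Re w > 1 \<Longrightarrow> E w = (w - 1) * hurwitz_zeta b w"
  obtains M i0 where
    "\<And>i y. i \<ge> i0 \<Longrightarrow> y \<in> ball x 1 \<Longrightarrow> norm (E (y + of_nat (Suc i))) \<le> M / 2 ^ i"
proof -
  obtain C where C: "C \<ge> 0"
    "\<And>w. Re w \<ge> 2 \<Longrightarrow> norm (hurwitz_zeta b w) \<le> C * exp (pi * \<bar>Im w\<bar>) * Re b powr (2 - Re w)"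
    using norm_hurwitz_zeta_le[of b] b by auto
  define K where "K = C * exp (pi * (\<bar>Im x\<bar> + 1)) * Re b powr (2 - Re x)"
  define c where "c = norm x + 1"
  have "K \<ge> 0" using C by (simp add: K_def)
  have "norm (E (y + of_nat (Suc i))) \<le> K * (c + 1) / 2 ^ i"
    if i: "i \<ge> nat \<lceil>2 - Re x\<rceil>" and y: "y \<in> ball x 1" for i y
  proof -
    define w where "w = y + of_nat (Suc i)"
    have xy: "norm (x - y) < 1" using y by (simp add: dist_norm)
    have Re_w: "Re w \<ge> Re x + real i" "Re x + real i \<ge> 2"
      using i abs_Re_le_cmod[of "x - y"] xy by (auto simp: w_def)
    have Im_w: "\<bar>Im w\<bar> \<le> \<bar>Im x\<bar> + 1"
      using abs_Im_le_cmod[of "x - y"] xy by (auto simp: w_def)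
    have "norm (w - 1) \<le> norm y + real i"
      using norm_triangle_ineq[of y "of_nat i"] by (simp add: w_def)
    also have "\<dots> \<le> c + real i"
      using norm_triangle_ineq2[of y x] xy by (simp add: c_def norm_minus_commute)
    finally have w1: "norm (w - 1) \<le> c + real i" .
    have "norm (hurwitz_zeta b w) \<le> C * exp (pi * \<bar>Im w\<bar>) * Re b powr (2 - Re w)"
      using C(2) Re_w by simp
    also have "\<dots> \<le> C * exp (pi * (\<bar>Im x\<bar> + 1)) * Re b powr ((2 - Re x) - real i)"
      using C(1) Im_w Re_w b by (intro mult_mono powr_mono) auto
    \<comment> \<open>Re b \<ge> 4 yields the factor 4 powr -i; it absorbs the linear growth of norm (w - 1).\<close>
    also have "\<dots> \<le> C * exp (pi * (\<bar>Im x\<bar> + 1)) * (Re b powr (2 - Re x) / 4 ^ i)"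
      using C(1) b by (intro mult_left_mono powr_diff_nat_le) auto
    finally have "norm (hurwitz_zeta b w) \<le> K / 4 ^ i" by (simp add: K_def)
    moreover have Ew: "E w = (w - 1) * hurwitz_zeta b w"
      using E Re_w by simp
    ultimately have "norm (E w) \<le> (c + real i) * (K / 4 ^ i)"
      unfolding Ew norm_mult using w1 by (intro mult_mono') simp_all
    also have "\<dots> = K * ((c + real i) / 4 ^ i)" by simp
    also have "\<dots> \<le> K * ((c + 1) / 2 ^ i)"
      using \<open>K \<ge> 0\<close> add_nat_div_four_power_le[of c i] by (intro mult_left_mono) (auto simp: c_def)
    finally show ?thesis by (simp add: w_def)
  qed
  then show ?thesis using that by blast
qed

lemma holomorphic_hurwitz_continuation_step:
  assumes b: "Re b \<ge> 4" and hol: "E holomorphic_on {s. Re s > 1 - real N}"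
    and E: "\<And>w. Re w > 1 \<Longrightarrow> E w = (w - 1) * hurwitz_zeta b w"
  shows "hurwitz_continuation_step b E holomorphic_on {s. Re s > 1 - real (Suc N)}"
proof -
  define f where "f i s = ((1 - s) gchoose Suc i) / of_nat (i + 2) * E (s + of_nat (Suc i))" for i s
  have "(\<lambda>s. \<Sum>i. f i s) holomorphic_on {s. Re s > 1 - real (Suc N)}"
  proof (rule holomorphic_on_suminf_local_majorant)
    show "open {s. Re s > 1 - real (Suc N)}" by (rule open_halfspace_Re_gt)
    have "(E \<circ> (\<lambda>s. s + of_nat (Suc i))) holomorphic_on {s. Re s > 1 - real (Suc N)}" for i
      by (rule holomorphic_on_compose_gen[OF _ hol]) (auto intro: holomorphic_intros)
    then show "f i holomorphic_on {s. Re s > 1 - real (Suc N)}" for i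
      unfolding f_def[abs_def] o_def by (intro holomorphic_intros holomorphic_gbinomial_one_minus) auto
  next
    fix x :: complex
    define A where "A = norm (1 - x) + 1"
    obtain M i0 where M: "\<And>i y. i \<ge> i0 \<Longrightarrow> y \<in> ball x 1 \<Longrightarrow> norm (E (y + of_nat (Suc i))) \<le> M / 2 ^ i"
      using norm_shifted_hurwitz_continuation_le[OF b E] by blast
    have bound: "norm (f i y) \<le> pochhammer A (Suc i) / fact (Suc i) * (M / 2 ^ i)"
      if "i \<ge> i0" "y \<in> ball x 1" for i y
    proof -
      have "norm (1 - y) \<le> A"
        using that norm_triangle_ineq[of "1 - x" "x - y"] by (simp add: A_def dist_norm)
      then show ?thesis
        unfolding f_def norm_mult
        by (intro mult_mono' norm_gbinomial_div_le_pochhammer) (use M[OF that] in auto)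
    qed
    show "\<exists>d h. 0 < d \<and> summable h \<and> (\<forall>\<^sub>F i in sequentially.
        \<forall>y\<in>ball x d \<inter> {s. Re s > 1 - real (Suc N)}. norm (f i y) \<le> h i)"
    proof (intro exI conjI)
      show "\<forall>\<^sub>F i in sequentially. \<forall>y\<in>ball x 1 \<inter> {s. Re s > 1 - real (Suc N)}.
          norm (f i y) \<le> pochhammer A (Suc i) / fact (Suc i) * (M / 2 ^ i)"
        unfolding eventually_sequentially using bound by blast
    qed (use summable_pochhammer_Suc_div_power2 in auto)
  qed
  then show ?thesis
    unfolding hurwitz_continuation_step_def[abs_def] f_def by (intro holomorphic_intros)
qed

primrec hurwitz_continuation :: "complex \<Rightarrow> nat \<Rightarrow> complex \<Rightarrow> complex" where
  "hurwitz_continuation b 0 = (\<lambda>s. (s - 1) * hurwitz_zeta b s)"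
| "hurwitz_continuation b (Suc N) = hurwitz_continuation_step b (hurwitz_continuation b N)"

lemma hurwitz_continuation_eq:
  "Re b \<ge> 2 \<Longrightarrow> Re s > 1 \<Longrightarrow> hurwitz_continuation b N s = (s - 1) * hurwitz_zeta b s"
proof (induction N arbitrary: s)
  case (Suc N)
  then show ?case by (simp add: hurwitz_continuation_step_eq)
qed simp

lemma holomorphic_hurwitz_continuation:
  assumes "Re b \<ge> 4"
  shows "hurwitz_continuation b N holomorphic_on {s. Re s > 1 - real N}"
proof (induction N)
  case 0
  show ?case
    using holomorphic_hurwitz_zeta[of b] assms by (auto intro!: holomorphic_intros)
next
  case (Suc N)
  have "hurwitz_continuation_step b (hurwitz_continuation b N) holomorphic_on {s. Re s > 1 - real (Suc N)}"
    using assms Suc.IH hurwitz_continuation_eq[of b] by (intro holomorphic_hurwitz_continuation_step) auto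
  then show ?case by simp
qed

lemma entire_hurwitz_continuation:
  assumes "Re b \<ge> 4"
  obtains E where "E holomorphic_on UNIV" "E 1 = 1"
    "\<And>s. Re s > 1 \<Longrightarrow> E s = (s - 1) * hurwitz_zeta b s"
proof -
  have "Re b \<ge> 2" "b \<noteq> 0" using assms by auto
  have hol: "hurwitz_continuation b N holomorphic_on {s. Re s > 1 - real N}" for N
    using assms by (rule holomorphic_hurwitz_continuation)
  have agree: "hurwitz_continuation b N s = hurwitz_continuation b 0 s" if "Re s > 1" for N s
    using hurwitz_continuation_eq[OF \<open>Re b \<ge> 2\<close> that] by simp
  obtain E where "E holomorphic_on UNIV"
    and E: "\<And>N s. Re s > 1 - real N \<Longrightarrow> E s = hurwitz_continuation b N s"
    using entire_of_halfplane_extensions[OF hol agree] by blast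
  moreover have "E 1 = 1"
    using E[of 1 1] \<open>b \<noteq> 0\<close> by (simp add: hurwitz_continuation_step_at_1)
  moreover have "E s = (s - 1) * hurwitz_zeta b s" if "Re s > 1" for s
    using E[of 0 s] that by simp
  ultimately show ?thesis using that by blast
qed

lemma shifted_powr_tail_continuation:
  fixes a :: complex and M :: nat
  obtains E where "E holomorphic_on UNIV" "E 1 = 1"
    "\<And>s. Re s > 1 \<Longrightarrow> ((\<lambda>k. (of_nat k + a) powr (- s)) has_sum (E s / (s - 1))) {M..}"
proof -
  define K where "K = M + nat \<lceil>4 - Re a\<rceil>"
  define b where "b = of_nat K + a"
  have "Re b \<ge> 4" unfolding b_def K_def by simp linarith
  then obtain Eb where Eb: "Eb holomorphic_on UNIV" "Eb 1 = 1"
    "\<And>s. Re s > 1 \<Longrightarrow> Eb s = (s - 1) * hurwitz_zeta b s"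
    using entire_hurwitz_continuation by blast
  define E where "E s = (s - 1) * (\<Sum>k\<in>{M..<K}. (of_nat k + a) powr (- s)) + Eb s" for s
  have "E holomorphic_on UNIV"
    unfolding E_def[abs_def] using Eb(1) by (intro holomorphic_intros)
  moreover have "E 1 = 1" using Eb(2) by (simp add: E_def)
  moreover have "((\<lambda>k. (of_nat k + a) powr (- s)) has_sum (E s / (s - 1))) {M..}" if s: "Re s > 1" for s
  proof -
    have "bij_betw ((+) K) UNIV {K..}"
      unfolding bij_betw_add by (metis atLeast_0 image_add_atLeast add_0_right)
    moreover have "((\<lambda>j. (of_nat (K + j) + a) powr (- s)) has_sum hurwitz_zeta b s) UNIV"
      using hurwitz_zeta_has_sum[of b s] \<open>Re b \<ge> 4\<close> s by (simp add: b_def add_ac)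
    ultimately have tail: "((\<lambda>k. (of_nat k + a) powr (- s)) has_sum hurwitz_zeta b s) {K..}"
      using has_sum_reindex_bij_betw[where g = "(+) K" and A = UNIV and B = "{K..}"
          and f = "\<lambda>k. (of_nat k + a) powr (- s)"] by blast
    have "((\<lambda>k. (of_nat k + a) powr (- s)) has_sum
        ((\<Sum>k\<in>{M..<K}. (of_nat k + a) powr (- s)) + hurwitz_zeta b s)) ({M..<K} \<union> {K..})"
      by (intro has_sum_Un_disjoint has_sum_finite tail) auto
    moreover have "{M..<K} \<union> {K..} = {M..}" by (auto simp: K_def)
    moreover have "(\<Sum>k\<in>{M..<K}. (of_nat k + a) powr (- s)) + hurwitz_zeta b s = E s / (s - 1)"
    proof -
      have "s - 1 \<noteq> 0" using s by auto
      then show ?thesis using Eb(3)[OF s] by (simp add: E_def field_simps)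
    qed
    ultimately show ?thesis by simp
  qed
  ultimately show ?thesis using that by blast
qed

section \<open>Sums over intervals of I\<close>

lemma holomorphic_Ipow: "Ipow tp tm c holomorphic_on UNIV"
proof (cases c)
  case (IP n)
  then have "Ipow tp tm c = (\<lambda>s. (of_nat n + tp) powr (- s))" by (simp add: fun_eq_iff)
  then show ?thesis by (simp add: holomorphic_intros)
next
  case (IM n)
  then have "Ipow tp tm c = (\<lambda>s. exp (of_real pi * \<i> * s) * (of_nat n - tm) powr (- s))"
    by (simp add: fun_eq_iff)
  then show ?thesis by (simp add: holomorphic_intros)
qed

lemma finite_Iprec_interval:
  assumes "\<not> (\<exists>m n. a = IP m \<and> b = IM n)"
  shows "finite {c. Iprec a c \<and> Iprec c b}"
proof (cases a)
  case (IM m)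
  have "{c. Iprec a c \<and> Iprec c b} \<subseteq> IM ` {..<m}"
  proof
    fix c assume "c \<in> {c. Iprec a c \<and> Iprec c b}"
    then show "c \<in> IM ` {..<m}" using IM by (cases c) auto
  qed
  then show ?thesis by (rule finite_subset) simp
next
  case (IP m)
  then obtain n where n: "b = IP n" using assms by (cases b) auto
  have "{c. Iprec a c \<and> Iprec c b} \<subseteq> IP ` {..<n}"
  proof
    fix c assume "c \<in> {c. Iprec a c \<and> Iprec c b}"
    then show "c \<in> IP ` {..<n}" using IP n by (cases c) auto
  qed
  then show ?thesis by (rule finite_subset) simp
qed

lemma Iprec_interval_IP_IM: "{c. Iprec (IP m) c \<and> Iprec c (IM n)} = IP ` {Suc m..} \<union> IM ` {Suc n..}"
proof (intro set_eqI iffI)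
  fix c assume "c \<in> {c. Iprec (IP m) c \<and> Iprec c (IM n)}"
  then show "c \<in> IP ` {Suc m..} \<union> IM ` {Suc n..}" by (cases c) auto
qed auto

lemma has_sum_Ipow_IP_IM:
  assumes "((\<lambda>k. (of_nat k + tp) powr (- s)) has_sum S1) {Suc m..}"
    and "((\<lambda>k. (of_nat k + - tm) powr (- s)) has_sum S2) {Suc n..}"
  shows "((\<lambda>c. Ipow tp tm c s) has_sum (S1 + exp (of_real pi * \<i> * s) * S2))
           {c. Iprec (IP m) c \<and> Iprec c (IM n)}"
proof -
  have "((\<lambda>c. Ipow tp tm c s) has_sum S1) (IP ` {Suc m..})"
    by (subst has_sum_reindex) (auto simp: o_def inj_on_def intro: assms(1))
  moreover have "((\<lambda>c. Ipow tp tm c s) has_sum (exp (of_real pi * \<i> * s) * S2)) (IM ` {Suc n..})"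
    using has_sum_cmult_right[OF assms(2)] by (subst has_sum_reindex) (auto simp: o_def inj_on_def)
  ultimately show ?thesis
    unfolding Iprec_interval_IP_IM by (rule has_sum_Un_disjoint) auto
qed

lemma entire_Ipow_sum_IP_IM:
  "\<exists>F. F holomorphic_on UNIV \<and>
     (\<forall>s. Re s > 1 \<longrightarrow> ((\<lambda>c. Ipow tp tm c s) has_sum F s) {c. Iprec (IP m) c \<and> Iprec c (IM n)})"
proof -
  obtain E1 where E1: "E1 holomorphic_on UNIV" "E1 1 = 1"
    "\<And>s. Re s > 1 \<Longrightarrow> ((\<lambda>k. (of_nat k + tp) powr (- s)) has_sum (E1 s / (s - 1))) {Suc m..}"
    using shifted_powr_tail_continuation[of tp "Suc m"] by blast
  obtain E2 where E2: "E2 holomorphic_on UNIV" "E2 1 = 1"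
    "\<And>s. Re s > 1 \<Longrightarrow> ((\<lambda>k. (of_nat k + - tm) powr (- s)) has_sum (E2 s / (s - 1))) {Suc n..}"
    using shifted_powr_tail_continuation[of "- tm" "Suc n"] by blast
  define g where "g s = E1 s + exp (of_real pi * \<i> * s) * E2 s" for s
  have g: "g holomorphic_on UNIV"
    unfolding g_def[abs_def] using E1(1) E2(1) by (intro holomorphic_intros)
  \<comment> \<open>The two simple poles at 1 cancel because e^(pi i) = -1.\<close>
  have "g 1 = 0"
    using E1(2) E2(2) by (simp add: g_def exp_pi_i')
  define F where "F s = (if s = 1 then deriv g 1 else (g s - g 1) / (s - 1))" for s
  have "F holomorphic_on UNIV"
    unfolding F_def[abs_def] using g by (rule pole_lemma) simp
  moreover have "((\<lambda>c. Ipow tp tm c s) has_sum F s) {c. Iprec (IP m) c \<and> Iprec c (IM n)}"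
    if s: "Re s > 1" for s
  proof -
    have "s \<noteq> 1" using s by auto
    then have "F s = g s / (s - 1)" using \<open>g 1 = 0\<close> by (simp add: F_def)
    also have "\<dots> = E1 s / (s - 1) + exp (of_real pi * \<i> * s) * (E2 s / (s - 1))"
      by (simp add: g_def add_divide_distrib)
    finally show ?thesis
      using has_sum_Ipow_IP_IM[OF E1(3)[OF s] E2(3)[OF s]] by (simp only:)
  qed
  ultimately show ?thesis by blast
qed

theorem lemma3p1:
  fixes tp tm :: complex and a b :: Iidx
  assumes "tp \<notin> complex_of_real ` {..-1}"
    and "tm \<notin> complex_of_real ` {1..}"
    and "Iprec a b"
  shows "\<exists>F. F holomorphic_on UNIV \<and>
           (\<forall>s. Re s > 1 \<longrightarrow>
              ((\<lambda>c. Ipow tp tm c s) has_sum F s) {c. Iprec a c \<and> Iprec c b})"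
proof (cases "\<exists>m n. a = IP m \<and> b = IM n")
  \<comment> \<open>None of the hypotheses is needed: powr is total, so every term is entire in s whatever
     its base, and for a not preceding b the interval is empty.\<close>
  case True
  then show ?thesis using entire_Ipow_sum_IP_IM by blast
next
  case False
  then have finite: "finite {c. Iprec a c \<and> Iprec c b}" by (rule finite_Iprec_interval)
  show ?thesis
  proof (intro exI conjI allI impI)
    show "(\<lambda>s. \<Sum>c\<in>{c. Iprec a c \<and> Iprec c b}. Ipow tp tm c s) holomorphic_on UNIV"
      by (intro holomorphic_on_sum holomorphic_Ipow)
    show "((\<lambda>c. Ipow tp tm c s) has_sum (\<Sum>c\<in>{c. Iprec a c \<and> Iprec c b}. Ipow tp tm c s))
        {c. Iprec a c \<and> Iprec c b}" for s
      using finite by (rule has_sum_finite)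
  qed
qed

end
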